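(* Let $\mathbf{G}=(\mathcal{V},\mathcal{E})$ be a directed graph on $\mathcal{V}=\{1,\dots,m\}$, let $a>0$, let $x=(x_1,\dots,x_m)\in[0,a)^m$ be fixed, and let $\{r_{ij}\}_{(i,j)\in\mathcal{E}}$ be independent random variables, each uniform on $[0,ma)$. Define $t_i=\mathrm{mod}\big(\sum_{j:(j,i)\in\mathcal{E}} r_{ji}-\sum_{j:(i,j)\in\mathcal{E}} r_{ij},\,ma\big)$ and $\tilde{x}_i=\mathrm{mod}(x_i+t_i,ma)$. If the undirected graph $\bar{\mathbf{G}}$ is connected, then the perturbed inputs $(\tilde{x}_1,\dots,\tilde{x}_m)$ are uniformly distributed over $[0,ma)^m$ subject to the constraint $\mathrm{mod}\big(\sum_{i=1}^m\tilde{x}_i,ma\big)=\sum_{i=1}^m x_i$.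
   Context: $\bar{\mathbf{G}}$ is the undirected graph on $\mathcal{V}$ obtained from $\mathbf{G}$ by ignoring edge orientations. For $a'>0$ and real $y$, $\mathrm{mod}(y,a')=y-pa'$ where $p$ is the unique integer with $y-pa'\in[0,a')$. *)

theory Defs
  imports "HOL-Probability.Probability"
begin

definition rmod :: "real \<Rightarrow> real \<Rightarrow> real" where
  "rmod y a' = y - a' * of_int \<lfloor>y / a'\<rfloor>"

definition undirected_connected :: "nat set \<Rightarrow> (nat \<times> nat) set \<Rightarrow> bool" where
  "undirected_connected V E \<longleftrightarrow> (\<forall>i\<in>V. \<forall>j\<in>V. (i, j) \<in> (E \<union> E\<inverse>)\<^sup>*)"

text \<open>Uniform distribution on [0,c)^m (coordinates 1..m) subject to mod(sum_i y_i, c) = s: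
  the first m-1 coordinates are i.i.d. uniform on [0,c) and the last coordinate is the unique
  value in [0,c) fulfilling the constraint.\<close>
definition constrained_uniform :: "nat \<Rightarrow> real \<Rightarrow> real \<Rightarrow> (nat \<Rightarrow> real) measure" where
  "constrained_uniform m c s =
     distr (PiM {1..<m} (\<lambda>_. uniform_measure lborel {0..<c}))
           (PiM {1..m} (\<lambda>_. borel))
           (\<lambda>y. restrict (y(m := rmod (s - (\<Sum>i\<in>{1..<m}. y i)) c)) {1..m})"

definition tshift :: "nat \<Rightarrow> real \<Rightarrow> (nat \<times> nat) set \<Rightarrow> nat \<Rightarrow> (nat \<times> nat \<Rightarrow> real) \<Rightarrow> real" where
  "tshift m a E i r = rmod ((\<Sum>j\<in>{j\<in>{1..m}. (j, i) \<in> E}. r (j, i))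
                          - (\<Sum>j\<in>{j\<in>{1..m}. (i, j) \<in> E}. r (i, j))) (real m * a)"

definition perturbed :: "nat \<Rightarrow> real \<Rightarrow> (nat \<times> nat) set \<Rightarrow> (nat \<Rightarrow> real) \<Rightarrow> (nat \<times> nat \<Rightarrow> real) \<Rightarrow> (nat \<Rightarrow> real)" where
  "perturbed m a E x r = (\<lambda>i\<in>{1..m}. rmod (x i + tshift m a E i r) (real m * a))"

end

theory Submission
  imports Defs
begin

text \<open>Shifting the edge variables by w modulo m a shifts the net inflow at every vertex by
  the net inflow of w, and when the undirected graph is connected every vector on {1..m-1}
  arises as the net inflows of some w. Hence the law of the first m - 1 perturbed inputs is a
  probability measure on the torus [0, m a)^(m-1) invariant under all translations, so it is
  the uniform (Haar) measure. The net inflows sum to zero, so the last perturbed input is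
  determined by the others through the constraint on the sum.\<close>

section \<open>Reduction modulo a period\<close>

lemma rmod_eq_frac: "c \<noteq> 0 \<Longrightarrow> rmod y c = c * frac (y / c)"
  by (simp add: rmod_def frac_def right_diff_distrib)

lemma rmod_bounds:
  assumes "c > 0"
  shows "0 \<le> rmod y c" "rmod y c < c"
  using assms frac_lt_1[of "y / c"] by (simp_all add: rmod_eq_frac)

lemma rmod_unique:
  assumes "c > 0" "0 \<le> y - c * of_int k" "y - c * of_int k < c"
  shows "rmod y c = y - c * of_int k"
proof -
  have "\<lfloor>y / c\<rfloor> = k"
    using assms by (intro floor_unique) (auto simp: field_simps)
  then show ?thesis by (simp add: rmod_def)
qed

lemma rmod_add_int_mult: "rmod (y + c * of_int k) c = rmod y c"
proof (cases "c = 0")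
  case False
  then have "\<lfloor>(y + c * of_int k) / c\<rfloor> = \<lfloor>y / c\<rfloor> + k"
    by (simp add: add_divide_distrib)
  then show ?thesis by (simp add: rmod_def algebra_simps)
qed (simp add: rmod_def)

lemma rmod_cong: "y - y' = c * of_int k \<Longrightarrow> rmod y c = rmod y' c"
proof -
  assume "y - y' = c * of_int k"
  then have "y = y' + c * of_int k" by simp
  then show ?thesis by (simp add: rmod_add_int_mult)
qed

lemma rmod_add_rmod: "rmod (rmod y c + z) c = rmod (y + z) c"
  by (rule rmod_cong[where k = "- \<lfloor>y / c\<rfloor>"]) (simp add: rmod_def)

lemma rmod_add_rmod_right: "rmod (z + rmod y c) c = rmod (z + y) c"
  using rmod_add_rmod[of y c z] by (simp add: add.commute)

lemma rmod_diff_sum_rmod: "rmod (y - (\<Sum>i\<in>S. rmod (f i) c)) c = rmod (y - sum f S) c"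
  by (rule rmod_cong[where k = "\<Sum>i\<in>S. \<lfloor>f i / c\<rfloor>"])
     (simp add: rmod_def sum_subtractf sum_distrib_left)

lemma rmod_add_cases:
  assumes "c > 0" "0 \<le> u" "u < c" "0 \<le> w" "w < c"
  shows "rmod (u + w) c = (if u + w < c then u + w else u + w - c)"
  using rmod_unique[OF assms(1), of "u + w" 0] rmod_unique[OF assms(1), of "u + w" 1] assms
  by auto

lemma measurable_rmod [measurable]: "(\<lambda>y. rmod y c) \<in> borel_measurable borel"
  unfolding rmod_def by measurable

section \<open>Translation invariant measures on the torus\<close>

lemma emeasure_lborel_vimage_plus:
  assumes "B \<in> sets borel"
  shows "emeasure lborel ((+) (t::real) -` B) = emeasure lborel B"
proof -
  have "emeasure (distr lborel borel ((+) t)) B = emeasure lborel ((+) t -` B \<inter> space lborel)"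
    using assms by (intro emeasure_distr) auto
  then show ?thesis by (simp add: lborel_distr_plus)
qed

text \<open>On [0,c), the map u \<mapsto> rmod (u + z) c is a rotation: it translates [0, c - w)
  onto [w, c) and [c - w, c) onto [0, w), where w = rmod z c.\<close>

lemma emeasure_Ico_vimage_rmod_shift:
  assumes c: "c > 0" and A: "A \<in> sets borel"
  shows "emeasure lborel ({0..<c} \<inter> (\<lambda>u. rmod (u + z) c) -` A) = emeasure lborel ({0..<c} \<inter> A)"
proof -
  define w where "w = rmod z c"
  have w: "0 \<le> w" "w < c"
    using rmod_bounds[OF c] by (auto simp: w_def)
  have rotate: "rmod (u + z) c = (if u + w < c then u + w else u + w - c)" if "0 \<le> u" "u < c" for u
    using rmod_add_rmod[of z c u] rmod_add_cases[OF c that w] by (simp add: w_def add.commute)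
  define S1 where "S1 = (+) w -` (A \<inter> {w..<c})"
  define S2 where "S2 = (+) (w - c) -` (A \<inter> {0..<w})"
  have "{0..<c} \<inter> (\<lambda>u. rmod (u + z) c) -` A = S1 \<union> S2"
  proof (intro set_eqI iffI)
    fix u assume "u \<in> {0..<c} \<inter> (\<lambda>u. rmod (u + z) c) -` A"
    then show "u \<in> S1 \<union> S2"
      using rotate[of u] w by (auto simp: S1_def S2_def add_diff_eq add.commute split: if_splits)
  next
    fix u assume "u \<in> S1 \<union> S2"
    then show "u \<in> {0..<c} \<inter> (\<lambda>u. rmod (u + z) c) -` A"
      using rotate[of u] w by (auto simp: S1_def S2_def add_diff_eq add.commute)
  qed
  also have "emeasure lborel (S1 \<union> S2) = emeasure lborel S1 + emeasure lborel S2"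
    using A by (intro plus_emeasure[symmetric]) (auto simp: S1_def S2_def)
  also have "\<dots> = emeasure lborel (A \<inter> {w..<c}) + emeasure lborel (A \<inter> {0..<w})"
    unfolding S1_def S2_def using A
    by (simp only: emeasure_lborel_vimage_plus sets.Int atLeastLessThan_borel)
  also have "\<dots> = emeasure lborel ((A \<inter> {w..<c}) \<union> (A \<inter> {0..<w}))"
    using A by (intro plus_emeasure) auto
  also have "(A \<inter> {w..<c}) \<union> (A \<inter> {0..<w}) = {0..<c} \<inter> A"
    using w by auto
  finally show ?thesis .
qed

abbreviation Unif :: "real \<Rightarrow> real measure" where
  "Unif c \<equiv> uniform_measure lborel {0..<c}"

lemma prob_space_Unif: "c > 0 \<Longrightarrow> prob_space (Unif c)"
  by (rule prob_space_uniform_measure) auto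

lemma distr_Unif_rmod_shift:
  assumes c: "c > 0"
  shows "distr (Unif c) borel (\<lambda>u. rmod (u + z) c) = Unif c"
proof (rule measure_eqI)
  fix A assume "A \<in> sets (distr (Unif c) borel (\<lambda>u. rmod (u + z) c))"
  then have A: "A \<in> sets borel" by simp
  have "(\<lambda>u. rmod (u + z) c) \<in> borel_measurable borel"
    by measurable
  from measurable_sets[OF this A] have "(\<lambda>u. rmod (u + z) c) -` A \<in> sets borel"
    by simp
  with A have "emeasure (distr (Unif c) borel (\<lambda>u. rmod (u + z) c)) A
      = emeasure lborel ({0..<c} \<inter> (\<lambda>u. rmod (u + z) c) -` A) / emeasure lborel {0..<c}"
    by (simp add: emeasure_distr emeasure_uniform_measure Int_commute)
  also have "\<dots> = emeasure (Unif c) A"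
    using A by (simp add: emeasure_Ico_vimage_rmod_shift[OF c A] emeasure_uniform_measure Int_commute)
  finally show "emeasure (distr (Unif c) borel (\<lambda>u. rmod (u + z) c)) A = emeasure (Unif c) A" .
qed simp

definition torus_shift :: "'i set \<Rightarrow> real \<Rightarrow> ('i \<Rightarrow> real) \<Rightarrow> ('i \<Rightarrow> real) \<Rightarrow> 'i \<Rightarrow> real" where
  "torus_shift I c z y = (\<lambda>i\<in>I. rmod (y i + z i) c)"

lemma torus_shift_commute: "torus_shift I c z y = torus_shift I c y z"
  by (simp add: torus_shift_def add.commute)

lemma sets_PiM_Unif: "sets (PiM I (\<lambda>_. Unif c)) = sets (PiM I (\<lambda>_. borel))"
  by (rule sets_PiM_cong) simp_all

lemma measurable_torus_shift:
  assumes "sets M = sets (PiM I (\<lambda>_. borel))"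
  shows "torus_shift I c z \<in> measurable M (PiM I (\<lambda>_. borel))"
  unfolding measurable_cong_sets[OF assms refl] torus_shift_def
  by (intro measurable_restrict) measurable

lemma distr_PiM_Unif_torus_shift:
  assumes I: "finite I" and c: "c > 0"
  shows "distr (PiM I (\<lambda>_. Unif c)) (PiM I (\<lambda>_. borel)) (torus_shift I c z) = PiM I (\<lambda>_. Unif c)"
proof -
  interpret P: product_prob_space "\<lambda>_. Unif c"
    by (intro product_prob_spaceI prob_space_Unif c)
  show ?thesis
  proof (rule P.PiM_eqI[OF I])
    show "sets (distr (PiM I (\<lambda>_. Unif c)) (PiM I (\<lambda>_. borel)) (torus_shift I c z))
        = sets (PiM I (\<lambda>_. Unif c))"
      by (simp add: sets_PiM_Unif)
    fix A assume A: "\<And>i. i \<in> I \<Longrightarrow> A i \<in> sets (Unif c)"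
    have shift_measurable: "(\<lambda>u. rmod (u + t) c) \<in> measurable (Unif c) borel" for t
      by measurable
    have "torus_shift I c z -` Pi\<^sub>E I A \<inter> space (PiM I (\<lambda>_. Unif c))
       = Pi\<^sub>E I (\<lambda>i. (\<lambda>u. rmod (u + z i) c) -` A i \<inter> space (Unif c))"
      by (auto simp: torus_shift_def space_PiM PiE_def Pi_def extensional_def)
    then have "emeasure (distr (PiM I (\<lambda>_. Unif c)) (PiM I (\<lambda>_. borel)) (torus_shift I c z)) (Pi\<^sub>E I A)
       = emeasure (PiM I (\<lambda>_. Unif c)) (Pi\<^sub>E I (\<lambda>i. (\<lambda>u. rmod (u + z i) c) -` A i \<inter> space (Unif c)))"
      using A I by (simp add: emeasure_distr measurable_torus_shift sets_PiM_Unif sets_PiM_I_finite)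
    also have "\<dots> = (\<Prod>i\<in>I. emeasure (distr (Unif c) borel (\<lambda>u. rmod (u + z i) c)) (A i))"
      using A measurable_sets[OF shift_measurable] by (simp add: P.emeasure_PiM I emeasure_distr)
    also have "\<dots> = (\<Prod>i\<in>I. emeasure (Unif c) (A i))"
      by (simp add: distr_Unif_rmod_shift[OF c])
    finally show "emeasure (distr (PiM I (\<lambda>_. Unif c)) (PiM I (\<lambda>_. borel)) (torus_shift I c z)) (Pi\<^sub>E I A)
       = (\<Prod>i\<in>I. emeasure (Unif c) (A i))" .
  qed
qed

lemma emeasure_pair_vimage_fst_invariant:
  assumes "prob_space M1" "prob_space M2"
    and f: "f \<in> measurable (M1 \<Otimes>\<^sub>M M2) N" and A: "A \<in> sets N"
    and invariant: "\<And>y. y \<in> space M2 \<Longrightarrow> distr M1 N (\<lambda>x. f (x, y)) = M1"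
  shows "emeasure (M1 \<Otimes>\<^sub>M M2) (f -` A \<inter> space (M1 \<Otimes>\<^sub>M M2)) = emeasure M1 A"
proof -
  interpret M1: prob_space M1 by fact
  interpret M2: prob_space M2 by fact
  interpret pair_sigma_finite M1 M2 ..
  have "emeasure (M1 \<Otimes>\<^sub>M M2) (f -` A \<inter> space (M1 \<Otimes>\<^sub>M M2))
      = (\<integral>\<^sup>+y. emeasure M1 ((\<lambda>x. (x, y)) -` (f -` A \<inter> space (M1 \<Otimes>\<^sub>M M2))) \<partial>M2)"
    by (rule emeasure_pair_measure_alt2[OF measurable_sets[OF f A]])
  also have "\<dots> = (\<integral>\<^sup>+y. emeasure M1 A \<partial>M2)"
  proof (rule nn_integral_cong)
    fix y assume y: "y \<in> space M2"
    have "(\<lambda>x. (x, y)) -` (f -` A \<inter> space (M1 \<Otimes>\<^sub>M M2)) = (\<lambda>x. f (x, y)) -` A \<inter> space M1"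
      using y by (auto simp: space_pair_measure)
    also have "emeasure M1 \<dots> = emeasure (distr M1 N (\<lambda>x. f (x, y))) A"
      using A measurable_Pair1[OF f y] by (simp add: emeasure_distr)
    finally show "emeasure M1 ((\<lambda>x. (x, y)) -` (f -` A \<inter> space (M1 \<Otimes>\<^sub>M M2))) = emeasure M1 A"
      by (simp add: invariant y)
  qed
  finally show ?thesis
    by (simp add: M2.emeasure_space_1)
qed

lemma emeasure_pair_vimage_snd_invariant:
  assumes "prob_space M1" "prob_space M2"
    and f: "f \<in> measurable (M1 \<Otimes>\<^sub>M M2) N" and A: "A \<in> sets N"
    and invariant: "\<And>x. x \<in> space M1 \<Longrightarrow> distr M2 N (\<lambda>y. f (x, y)) = M2"
  shows "emeasure (M1 \<Otimes>\<^sub>M M2) (f -` A \<inter> space (M1 \<Otimes>\<^sub>M M2)) = emeasure M2 A"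
proof -
  interpret M1: prob_space M1 by fact
  interpret M2: prob_space M2 by fact
  have "emeasure (M1 \<Otimes>\<^sub>M M2) (f -` A \<inter> space (M1 \<Otimes>\<^sub>M M2))
      = (\<integral>\<^sup>+x. emeasure M2 (Pair x -` (f -` A \<inter> space (M1 \<Otimes>\<^sub>M M2))) \<partial>M1)"
    by (rule M2.emeasure_pair_measure_alt[OF measurable_sets[OF f A]])
  also have "\<dots> = (\<integral>\<^sup>+x. emeasure M2 A \<partial>M1)"
  proof (rule nn_integral_cong)
    fix x assume x: "x \<in> space M1"
    have "Pair x -` (f -` A \<inter> space (M1 \<Otimes>\<^sub>M M2)) = (\<lambda>y. f (x, y)) -` A \<inter> space M2"
      using x by (auto simp: space_pair_measure)
    also have "emeasure M2 \<dots> = emeasure (distr M2 N (\<lambda>y. f (x, y))) A"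
      using A measurable_Pair2[OF f x] by (simp add: emeasure_distr)
    finally show "emeasure M2 (Pair x -` (f -` A \<inter> space (M1 \<Otimes>\<^sub>M M2))) = emeasure M2 A"
      by (simp add: invariant x)
  qed
  finally show ?thesis
    by (simp add: M1.emeasure_space_1)
qed

text \<open>Uniqueness of Haar measure on the torus: if \<mu> is shift invariant, then the law of
  X + Y for independent X \<sim> \<mu> and Y uniform is both \<mu> and uniform.\<close>

lemma PiM_Unif_unique:
  assumes I: "finite I" and c: "c > 0" and \<mu>: "prob_space \<mu>"
    and sets_\<mu>: "sets \<mu> = sets (PiM I (\<lambda>_. borel))"
    and invariant: "\<And>z. distr \<mu> (PiM I (\<lambda>_. borel)) (torus_shift I c z) = \<mu>"
  shows "\<mu> = PiM I (\<lambda>_. Unif c)"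
proof (rule measure_eqI)
  let ?U = "PiM I (\<lambda>_. Unif c)"
  let ?add = "\<lambda>p. torus_shift I c (snd p) (fst p)"
  have U: "prob_space ?U"
    by (intro prob_space_PiM prob_space_Unif c)
  have "?add \<in> measurable (PiM I (\<lambda>_. borel) \<Otimes>\<^sub>M PiM I (\<lambda>_. borel)) (PiM I (\<lambda>_. borel))"
    unfolding torus_shift_def by (intro measurable_restrict) measurable
  then have add: "?add \<in> measurable (\<mu> \<Otimes>\<^sub>M ?U) (PiM I (\<lambda>_. borel))"
    by (simp add: measurable_cong_sets[OF sets_pair_measure_cong[OF sets_\<mu> sets_PiM_Unif] refl])
  show "sets \<mu> = sets ?U"
    by (simp add: sets_\<mu> sets_PiM_Unif)
  fix A assume "A \<in> sets \<mu>"
  then have A: "A \<in> sets (PiM I (\<lambda>_. borel))"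
    by (simp add: sets_\<mu>)
  have "emeasure \<mu> A = emeasure (\<mu> \<Otimes>\<^sub>M ?U) (?add -` A \<inter> space (\<mu> \<Otimes>\<^sub>M ?U))"
    by (rule emeasure_pair_vimage_fst_invariant[OF \<mu> U add A, symmetric]) (simp add: invariant)
  also have "\<dots> = emeasure ?U A"
  proof (rule emeasure_pair_vimage_snd_invariant[OF \<mu> U add A])
    fix x
    have "(\<lambda>y. ?add (x, y)) = torus_shift I c x"
      by (simp add: fun_eq_iff torus_shift_commute)
    then show "distr ?U (PiM I (\<lambda>_. borel)) (\<lambda>y. ?add (x, y)) = ?U"
      by (simp add: distr_PiM_Unif_torus_shift[OF I c])
  qed
  finally show "emeasure \<mu> A = emeasure ?U A" .
qed

section \<open>Net inflows\<close>

definition net_inflow :: "'v set \<Rightarrow> ('v \<times> 'v) set \<Rightarrow> 'v \<Rightarrow> ('v \<times> 'v \<Rightarrow> real) \<Rightarrow> real" where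
  "net_inflow V E i r =
     (\<Sum>j\<in>{j\<in>V. (j, i) \<in> E}. r (j, i)) - (\<Sum>j\<in>{j\<in>V. (i, j) \<in> E}. r (i, j))"

lemma net_inflow_zero [simp]: "net_inflow V E i (\<lambda>_. 0) = 0"
  by (simp add: net_inflow_def)

lemma net_inflow_add: "net_inflow V E i (\<lambda>e. f e + g e) = net_inflow V E i f + net_inflow V E i g"
  by (simp add: net_inflow_def sum.distrib)

lemma net_inflow_diff: "net_inflow V E i (\<lambda>e. f e - g e) = net_inflow V E i f - net_inflow V E i g"
  by (simp add: net_inflow_def sum_subtractf)

lemma net_inflow_mult: "net_inflow V E i (\<lambda>e. k * f e) = k * net_inflow V E i f"
  by (simp add: net_inflow_def sum_distrib_left right_diff_distrib)

lemma net_inflow_sum: "net_inflow V E i (\<lambda>e. \<Sum>k\<in>K. f k e) = (\<Sum>k\<in>K. net_inflow V E i (f k))"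
  by (simp add: net_inflow_def sum_subtractf sum.swap[of _ K])

lemma net_inflow_of_int_in_Ints: "net_inflow V E i (\<lambda>e. of_int (g e)) \<in> \<int>"
  unfolding net_inflow_def by (intro Ints_diff Ints_sum Ints_of_int)

lemma net_inflow_restrict [simp]: "net_inflow V E i (restrict r E) = net_inflow V E i r"
  by (simp add: net_inflow_def)

lemma net_inflow_edge_indicator:
  assumes "finite V" "(p, q) \<in> E" "p \<in> V" "q \<in> V"
  shows "net_inflow V E i (\<lambda>e. if e = (p, q) then 1 else 0)
       = (if i = q then 1 else 0) - (if i = p then 1 else 0)"
  using assms by (auto simp: net_inflow_def sum.delta')

lemma sum_net_inflow_eq_0:
  assumes "finite V"
  shows "(\<Sum>i\<in>V. net_inflow V E i r) = 0"
proof -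
  have "(\<Sum>i\<in>V. net_inflow V E i r) = (\<Sum>i\<in>V. \<Sum>j\<in>V. if (j, i) \<in> E then r (j, i) else 0)
        - (\<Sum>i\<in>V. \<Sum>j\<in>V. if (i, j) \<in> E then r (i, j) else 0)"
    using assms by (simp add: net_inflow_def sum_subtractf sum.inter_filter)
  also have "(\<Sum>i\<in>V. \<Sum>j\<in>V. if (i, j) \<in> E then r (i, j) else 0)
           = (\<Sum>i\<in>V. \<Sum>j\<in>V. if (j, i) \<in> E then r (j, i) else 0)"
    by (rule sum.swap)
  finally show ?thesis by simp
qed

text \<open>A unit of flow along an undirected path from k to \<rho>, sent forwards or backwards
  along each edge according to its orientation.\<close>

lemma net_inflow_path:
  assumes V: "finite V" and E: "E \<subseteq> V \<times> V" and path: "(k, \<rho>) \<in> (E \<union> E\<inverse>)\<^sup>*"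
  shows "\<exists>w. \<forall>i. net_inflow V E i w = (if i = k then 1 else 0) - (if i = \<rho> then 1 else 0)"
  using path
proof (induction rule: converse_rtrancl_induct)
  case base
  show ?case by (rule exI[of _ "\<lambda>_. 0"]) simp
next
  case (step k l)
  then obtain w where w: "\<And>i. net_inflow V E i w = (if i = l then 1 else 0) - (if i = \<rho> then 1 else 0)"
    by blast
  from step(1) show ?case
  proof
    assume kl: "(k, l) \<in> E"
    with E have "k \<in> V" "l \<in> V" by auto
    then show ?case
      by (intro exI[of _ "\<lambda>e. w e - (if e = (k, l) then 1 else 0)"])
         (simp add: net_inflow_diff w net_inflow_edge_indicator[OF V kl])
  next
    assume "(k, l) \<in> E\<inverse>"
    then have lk: "(l, k) \<in> E" by simp
    with E have "k \<in> V" "l \<in> V" by auto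
    then show ?case
      by (intro exI[of _ "\<lambda>e. w e + (if e = (l, k) then 1 else 0)"])
         (simp add: net_inflow_add w net_inflow_edge_indicator[OF V lk])
  qed
qed

lemma net_inflow_surj:
  assumes V: "finite V" and E: "E \<subseteq> V \<times> V" and S: "finite S" "\<rho> \<notin> S"
    and connected: "\<And>k. k \<in> S \<Longrightarrow> (k, \<rho>) \<in> (E \<union> E\<inverse>)\<^sup>*"
  shows "\<exists>w. \<forall>i\<in>S. net_inflow V E i w = z i"
proof -
  obtain W where W: "\<And>k i. k \<in> S \<Longrightarrow>
      net_inflow V E i (W k) = (if i = k then 1 else 0) - (if i = \<rho> then 1 else 0)"
    using net_inflow_path[OF V E connected] by metis
  have "net_inflow V E i (\<lambda>e. \<Sum>k\<in>S. z k * W k e) = z i" if i: "i \<in> S" for i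
  proof -
    have "net_inflow V E i (\<lambda>e. \<Sum>k\<in>S. z k * W k e) = (\<Sum>k\<in>S. z k * net_inflow V E i (W k))"
      by (simp add: net_inflow_sum net_inflow_mult)
    also have "\<dots> = (\<Sum>k\<in>S. if k = i then z k else 0)"
      using i S by (intro sum.cong) (auto simp: W)
    finally show ?thesis
      using i S by simp
  qed
  then show ?thesis by blast
qed

lemma measurable_net_inflow [measurable]:
  "(\<lambda>r. net_inflow V E i r) \<in> borel_measurable (PiM E (\<lambda>_. borel))"
  unfolding net_inflow_def by measurable

section \<open>Law of the perturbed inputs\<close>

definition perturbed_on :: "'v set \<Rightarrow> ('v \<times> 'v) set \<Rightarrow> 'v set \<Rightarrow> real \<Rightarrow> ('v \<Rightarrow> real) \<Rightarrow>
    ('v \<times> 'v \<Rightarrow> real) \<Rightarrow> 'v \<Rightarrow> real" where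
  "perturbed_on V E S c b r = (\<lambda>i\<in>S. rmod (b i + net_inflow V E i r) c)"

lemma measurable_perturbed_on:
  assumes "sets M = sets (PiM E (\<lambda>_. borel))"
  shows "perturbed_on V E S c b \<in> measurable M (PiM S (\<lambda>_. borel))"
  unfolding measurable_cong_sets[OF assms refl] perturbed_on_def
  by (intro measurable_restrict) measurable

lemma torus_shift_perturbed_on:
  assumes w: "\<And>i. i \<in> S \<Longrightarrow> net_inflow V E i w = z i"
  shows "torus_shift S c z (perturbed_on V E S c b r) = perturbed_on V E S c b (torus_shift E c w r)"
proof (rule ext)
  fix i
  show "torus_shift S c z (perturbed_on V E S c b r) i = perturbed_on V E S c b (torus_shift E c w r) i"
  proof (cases "i \<in> S")
    case True
    define k where "k e = \<lfloor>(r e + w e) / c\<rfloor>" for e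
    have "net_inflow V E i (torus_shift E c w r) = net_inflow V E i (\<lambda>e. r e + w e - c * of_int (k e))"
      by (simp add: torus_shift_def rmod_def k_def)
    also have "\<dots> = net_inflow V E i r + z i - c * net_inflow V E i (\<lambda>e. of_int (k e))"
      by (simp add: net_inflow_diff net_inflow_add net_inflow_mult w[OF True])
    finally obtain n where n: "net_inflow V E i (torus_shift E c w r) = net_inflow V E i r + z i - c * of_int n"
      using net_inflow_of_int_in_Ints[of V E i k] by (auto elim: Ints_cases)
    have "torus_shift S c z (perturbed_on V E S c b r) i = rmod (b i + net_inflow V E i r + z i) c"
      using True by (simp add: torus_shift_def perturbed_on_def rmod_add_rmod)
    also have "\<dots> = rmod (b i + net_inflow V E i (torus_shift E c w r)) c"
      by (rule rmod_cong[where k = n]) (simp add: n)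
    finally show ?thesis
      using True by (simp add: perturbed_on_def)
  qed (simp add: torus_shift_def perturbed_on_def)
qed

lemma distr_perturbed_on_PiM_Unif:
  assumes V: "finite V" and E: "E \<subseteq> V \<times> V" and S: "finite S" "\<rho> \<notin> S"
    and connected: "\<And>k. k \<in> S \<Longrightarrow> (k, \<rho>) \<in> (E \<union> E\<inverse>)\<^sup>*" and c: "c > 0"
  shows "distr (PiM E (\<lambda>_. Unif c)) (PiM S (\<lambda>_. borel)) (perturbed_on V E S c b) = PiM S (\<lambda>_. Unif c)"
proof (rule PiM_Unif_unique[OF S(1) c])
  let ?P = "PiM E (\<lambda>_. Unif c)" and ?\<Psi> = "perturbed_on V E S c b"
  have "finite E"
    using V E by (meson finite_SigmaI finite_subset)
  have \<Psi>: "?\<Psi> \<in> measurable ?P (PiM S (\<lambda>_. borel))"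
    "?\<Psi> \<in> measurable (PiM E (\<lambda>_. borel)) (PiM S (\<lambda>_. borel))"
    by (simp_all add: measurable_perturbed_on sets_PiM_Unif)
  show "prob_space (distr ?P (PiM S (\<lambda>_. borel)) ?\<Psi>)"
    by (intro prob_space.prob_space_distr prob_space_PiM prob_space_Unif c \<Psi>)
  show "sets (distr ?P (PiM S (\<lambda>_. borel)) ?\<Psi>) = sets (PiM S (\<lambda>_. borel))"
    by simp
  fix z
  obtain w where w: "\<And>i. i \<in> S \<Longrightarrow> net_inflow V E i w = z i"
    using net_inflow_surj[OF V E S connected] by blast
  have "distr (distr ?P (PiM S (\<lambda>_. borel)) ?\<Psi>) (PiM S (\<lambda>_. borel)) (torus_shift S c z)
      = distr ?P (PiM S (\<lambda>_. borel)) (torus_shift S c z \<circ> ?\<Psi>)"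
    by (intro distr_distr measurable_torus_shift \<Psi>) simp
  also have "\<dots> = distr ?P (PiM S (\<lambda>_. borel)) (?\<Psi> \<circ> torus_shift E c w)"
    by (simp add: comp_def torus_shift_perturbed_on[OF w])
  also have "\<dots> = distr (distr ?P (PiM E (\<lambda>_. borel)) (torus_shift E c w)) (PiM S (\<lambda>_. borel)) ?\<Psi>"
    by (intro distr_distr[symmetric] measurable_torus_shift \<Psi>) (simp add: sets_PiM_Unif)
  also have "distr ?P (PiM E (\<lambda>_. borel)) (torus_shift E c w) = ?P"
    by (rule distr_PiM_Unif_torus_shift[OF \<open>finite E\<close> c])
  finally show "distr (distr ?P (PiM S (\<lambda>_. borel)) ?\<Psi>) (PiM S (\<lambda>_. borel)) (torus_shift S c z)
      = distr ?P (PiM S (\<lambda>_. borel)) ?\<Psi>" .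
qed

lemma perturbed_eq_perturbed_on: "perturbed m a E x = perturbed_on {1..m} E {1..m} (real m * a) x"
  by (simp add: fun_eq_iff perturbed_def perturbed_on_def tshift_def net_inflow_def rmod_add_rmod_right)

definition complete_last :: "nat \<Rightarrow> real \<Rightarrow> real \<Rightarrow> (nat \<Rightarrow> real) \<Rightarrow> nat \<Rightarrow> real" where
  "complete_last m c s y = restrict (y(m := rmod (s - (\<Sum>i\<in>{1..<m}. y i)) c)) {1..m}"

lemma constrained_uniform_eq_distr_complete_last:
  "constrained_uniform m c s = distr (PiM {1..<m} (\<lambda>_. Unif c)) (PiM {1..m} (\<lambda>_. borel)) (complete_last m c s)"
  by (simp add: constrained_uniform_def complete_last_def[abs_def])

lemma measurable_complete_last:
  "complete_last m c s \<in> measurable (PiM {1..<m} (\<lambda>_. borel)) (PiM {1..m} (\<lambda>_. borel))"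
proof -
  have "complete_last m c s
      = (\<lambda>y. \<lambda>i\<in>{1..m}. if i = m then rmod (s - (\<Sum>j\<in>{1..<m}. y j)) c else y i)"
    by (simp add: complete_last_def fun_eq_iff)
  also have "\<dots> \<in> measurable (PiM {1..<m} (\<lambda>_. borel)) (PiM {1..m} (\<lambda>_. borel))"
  proof (intro measurable_restrict)
    fix i assume "i \<in> {1..m}"
    then show "(\<lambda>y. if i = m then rmod (s - (\<Sum>j\<in>{1..<m}. y j)) c else y i)
        \<in> borel_measurable (PiM {1..<m} (\<lambda>_. borel))"
      by (cases "i = m") (simp_all, measurable)
  qed
  finally show ?thesis .
qed

lemma perturbed_on_eq_complete_last:
  assumes "m \<ge> 1"
  shows "perturbed_on {1..m} E {1..m} c x
       = complete_last m c (\<Sum>i\<in>{1..m}. x i) \<circ> perturbed_on {1..m} E {1..<m} c x"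
proof (intro ext)
  fix r i
  let ?D = "\<lambda>i. net_inflow {1..m} E i r"
  have "(\<Sum>i\<in>{1..m}. x i) - (\<Sum>i\<in>{1..<m}. x i + ?D i) = x m + ?D m"
    using sum_net_inflow_eq_0[of "{1..m}" E r] unfolding sum.last_plus[OF assms] sum.distrib
    by simp
  then have "rmod ((\<Sum>i\<in>{1..m}. x i) - (\<Sum>i\<in>{1..<m}. rmod (x i + ?D i) c)) c = rmod (x m + ?D m) c"
    by (simp add: rmod_diff_sum_rmod)
  then show "perturbed_on {1..m} E {1..m} c x r i
      = (complete_last m c (\<Sum>i\<in>{1..m}. x i) \<circ> perturbed_on {1..m} E {1..<m} c x) r i"
    using assms by (auto simp: perturbed_on_def complete_last_def)
qed

theorem lemma2:
  fixes m :: nat and a :: real and E :: "(nat \<times> nat) set" and x :: "nat \<Rightarrow> real"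
  assumes "m \<ge> 1"
    and "a > 0"
    and "E \<subseteq> {1..m} \<times> {1..m}"
    and "\<And>i. i \<in> {1..m} \<Longrightarrow> x i \<in> {0..<a}"
    and "undirected_connected {1..m} E"
  shows "distr (PiM E (\<lambda>_. uniform_measure lborel {0..<real m * a}))
               (PiM {1..m} (\<lambda>_. borel))
               (perturbed m a E x)
         = constrained_uniform m (real m * a) (\<Sum>i\<in>{1..m}. x i)"
proof -
  let ?c = "real m * a" and ?S = "{1..<m}"
  have c: "?c > 0"
    using assms(1,2) by simp
  have connected: "(k, m) \<in> (E \<union> E\<inverse>)\<^sup>*" if "k \<in> ?S" for k
    using assms(1,5) that by (auto simp: undirected_connected_def)
  have "distr (PiM E (\<lambda>_. Unif ?c)) (PiM {1..m} (\<lambda>_. borel)) (perturbed m a E x)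
      = distr (PiM E (\<lambda>_. Unif ?c)) (PiM {1..m} (\<lambda>_. borel))
          (complete_last m ?c (\<Sum>i\<in>{1..m}. x i) \<circ> perturbed_on {1..m} E ?S ?c x)"
    unfolding perturbed_eq_perturbed_on perturbed_on_eq_complete_last[OF assms(1)] ..
  also have "\<dots> = distr (distr (PiM E (\<lambda>_. Unif ?c)) (PiM ?S (\<lambda>_. borel)) (perturbed_on {1..m} E ?S ?c x))
          (PiM {1..m} (\<lambda>_. borel)) (complete_last m ?c (\<Sum>i\<in>{1..m}. x i))"
    by (intro distr_distr[symmetric] measurable_complete_last measurable_perturbed_on)
       (simp add: sets_PiM_Unif)
  also have "distr (PiM E (\<lambda>_. Unif ?c)) (PiM ?S (\<lambda>_. borel)) (perturbed_on {1..m} E ?S ?c x)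
      = PiM ?S (\<lambda>_. Unif ?c)"
    by (rule distr_perturbed_on_PiM_Unif[OF _ assms(3) _ _ connected c]) auto
  finally show ?thesis
    by (simp add: constrained_uniform_eq_distr_complete_last)
qed

end
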